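(* Let $\mathbf{A}=(\mathcal{P},\mathcal{L},\parallel)$ and $\mathbf{A}'=(\mathcal{P}',\mathcal{L}',\parallel')$ be affine spaces with $\dim\mathbf{A}'\ge 3$. Suppose that $\varphi:\mathcal{L}\to\mathcal{L}'$ is an isomorphism of the Plücker space $(\mathcal{L},\sim)$ onto the Plücker space $(\mathcal{L}',\sim')$, i.e. a bijection such that for all $a,b\in\mathcal{L}$: $a\sim b \iff a^\varphi\sim' b^\varphi$. Then the mapping $$\kappa:\mathcal{P}\to\mathcal{P}',\qquad a\cap b\mapsto a^\varphi\cap b^\varphi\quad(a,b\in\mathcal{L},\ a\approx b)$$ is well defined (i.e. for adjacent lines $a,b$ the lines $a^\varphi,b^\varphi$ meet in exactly one point, and this point depends only on the point $a\cap b$, not on the choice of the adjacent lines $a,b$ through it), and $\kappa$ is a collineation.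
   Context: An affine space $\mathbf{A}=(\mathcal{P},\mathcal{L},\parallel)$ has point set $\mathcal{P}$, line set $\mathcal{L}$ (lines viewed as subsets of $\mathcal{P}$) and parallelism $\parallel$. Two lines $a,b\in\mathcal{L}$ are called related, written $a\sim b$, if $a\cap b\neq\emptyset$ (so every line is related to itself); they are adjacent, written $a\approx b$, if $a\sim b$ and $a\neq b$. The pair $(\mathcal{L},\sim)$ is called the affine Plücker space on $\mathbf{A}$; similarly $\sim'$, $\approx'$ for $\mathbf{A}'$. The image of $x$ under a map $\varphi$ is written $x^\varphi$. A collineation $\mathcal{P}\to\mathcal{P}'$ is a bijection that maps collinear triples of points to collinear triples and non-collinear triples to non-collinear triples. *)

theory Defs
  imports Main
begin

text \<open>Axioms (Lenz / Karzel--Kroll): linear space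
with at least two points per line, parallelism an equivalence relation on L,
Euclid's parallel axiom, and the triangle (Tamaschke) axiom.\<close>

definition collinear :: "'p set set \<Rightarrow> 'p \<Rightarrow> 'p \<Rightarrow> 'p \<Rightarrow> bool" where
  "collinear L x y z \<longleftrightarrow> (\<exists>l\<in>L. x \<in> l \<and> y \<in> l \<and> z \<in> l)"

definition affine_space :: "'p set \<Rightarrow> 'p set set \<Rightarrow> ('p set \<Rightarrow> 'p set \<Rightarrow> bool) \<Rightarrow> bool" where
  "affine_space P L par \<longleftrightarrow>
     (\<forall>l\<in>L. l \<subseteq> P \<and> (\<exists>x y. x \<noteq> y \<and> x \<in> l \<and> y \<in> l)) \<and>
     (\<forall>x\<in>P. \<forall>y\<in>P. x \<noteq> y \<longrightarrow> (\<exists>!l. l \<in> L \<and> x \<in> l \<and> y \<in> l)) \<and>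
     (\<forall>a b. par a b \<longrightarrow> a \<in> L \<and> b \<in> L) \<and>
     (\<forall>a\<in>L. par a a) \<and>
     (\<forall>a b. par a b \<longrightarrow> par b a) \<and>
     (\<forall>a b c. par a b \<longrightarrow> par b c \<longrightarrow> par a c) \<and>
     (\<forall>x\<in>P. \<forall>l\<in>L. \<exists>!m. m \<in> L \<and> x \<in> m \<and> par m l) \<and>
     (\<forall>a b c a' b'. a \<in> P \<and> b \<in> P \<and> c \<in> P \<and> \<not> collinear L a b c \<and>
        a' \<in> P \<and> b' \<in> P \<and> a' \<noteq> b' \<and>
        (\<forall>l\<in>L. \<forall>l'\<in>L. a \<in> l \<and> b \<in> l \<and> a' \<in> l' \<and> b' \<in> l' \<longrightarrow> par l l') \<longrightarrow>
        (\<forall>m\<in>L. \<forall>n\<in>L. a' \<in> m \<and> b' \<in> n \<and>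
            (\<exists>l\<in>L. a \<in> l \<and> c \<in> l \<and> par m l) \<and>
            (\<exists>l\<in>L. b \<in> l \<and> c \<in> l \<and> par n l) \<longrightarrow> m \<inter> n \<noteq> {}))"

definition affine_subspace :: "'p set \<Rightarrow> 'p set set \<Rightarrow> ('p set \<Rightarrow> 'p set \<Rightarrow> bool) \<Rightarrow> 'p set \<Rightarrow> bool" where
  "affine_subspace P L par S \<longleftrightarrow>
     S \<subseteq> P \<and>
     (\<forall>l\<in>L. \<forall>x\<in>S. \<forall>y\<in>S. x \<noteq> y \<and> x \<in> l \<and> y \<in> l \<longrightarrow> l \<subseteq> S) \<and>
     (\<forall>l\<in>L. \<forall>m\<in>L. \<forall>x\<in>S. l \<subseteq> S \<and> x \<in> m \<and> par m l \<longrightarrow> m \<subseteq> S)"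

definition dim_ge :: "'p set \<Rightarrow> 'p set set \<Rightarrow> ('p set \<Rightarrow> 'p set \<Rightarrow> bool) \<Rightarrow> nat \<Rightarrow> bool" where
  "dim_ge P L par n \<longleftrightarrow>
     (\<exists>S :: nat \<Rightarrow> 'p set. (\<forall>i\<le>n. affine_subspace P L par (S i)) \<and> S 0 \<noteq> {} \<and>
        (\<forall>i<n. S i \<subset> S (Suc i)))"

definition related :: "'p set \<Rightarrow> 'p set \<Rightarrow> bool" where
  "related a b \<longleftrightarrow> a \<inter> b \<noteq> {}"

definition adjacent :: "'p set \<Rightarrow> 'p set \<Rightarrow> bool" where
  "adjacent a b \<longleftrightarrow> related a b \<and> a \<noteq> b"

definition collineation ::
  "'p set \<Rightarrow> 'p set set \<Rightarrow> 'q set \<Rightarrow> 'q set set \<Rightarrow> ('p \<Rightarrow> 'q) \<Rightarrow> bool" where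
  "collineation P L P' L' f \<longleftrightarrow> bij_betw f P P' \<and>
     (\<forall>x\<in>P. \<forall>y\<in>P. \<forall>z\<in>P. collinear L x y z \<longrightarrow> collinear L' (f x) (f y) (f z)) \<and>
     (\<forall>x\<in>P. \<forall>y\<in>P. \<forall>z\<in>P. \<not> collinear L x y z \<longrightarrow> \<not> collinear L' (f x) (f y) (f z))"

end

theory Submission
  imports Defs
begin

(*
  Call a set K of lines a dominating maximal clique if its lines
  pairwise meet, no further line meets all of them, and every line meets some line of K.
  These notions are defined by ~ alone, so the isomorphism phi maps dominating maximal
  cliques of A onto dominating maximal cliques of A'.  The pencil of all lines through a
  point is always one.  Conversely, if dim A' >= 3, every dominating maximal clique of A' is
  a pencil: otherwise it contains three lines forming a triangle; every line meeting all
  three sides lies in the plane of the triangle, and a parallel to one side through a point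
  off that plane meets none of them, contradicting domination.  Hence phi maps the pencil
  of x onto the pencil of a point kappa x; kappa preserves and reflects incidence, so it is
  the required well-defined collineation.
*)

locale affine_geometry =
  fixes P :: "'p set" and L :: "'p set set" and par :: "'p set \<Rightarrow> 'p set \<Rightarrow> bool"
  assumes lines_ax: "\<forall>l\<in>L. l \<subseteq> P \<and> (\<exists>x y. x \<noteq> y \<and> x \<in> l \<and> y \<in> l)"
    and joining_line_ax: "\<forall>x\<in>P. \<forall>y\<in>P. x \<noteq> y \<longrightarrow> (\<exists>!l. l \<in> L \<and> x \<in> l \<and> y \<in> l)"
    and par_lines_ax: "\<forall>a b. par a b \<longrightarrow> a \<in> L \<and> b \<in> L"
    and par_refl_ax: "\<forall>a\<in>L. par a a"
    and par_sym_ax: "\<forall>a b. par a b \<longrightarrow> par b a"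
    and par_trans_ax: "\<forall>a b c. par a b \<longrightarrow> par b c \<longrightarrow> par a c"
    and parallel_ax: "\<forall>x\<in>P. \<forall>l\<in>L. \<exists>!m. m \<in> L \<and> x \<in> m \<and> par m l"
    and triangle_ax: "\<forall>a b c a' b'. a \<in> P \<and> b \<in> P \<and> c \<in> P \<and> \<not> collinear L a b c \<and>
        a' \<in> P \<and> b' \<in> P \<and> a' \<noteq> b' \<and>
        (\<forall>l\<in>L. \<forall>l'\<in>L. a \<in> l \<and> b \<in> l \<and> a' \<in> l' \<and> b' \<in> l' \<longrightarrow> par l l') \<longrightarrow>
        (\<forall>m\<in>L. \<forall>n\<in>L. a' \<in> m \<and> b' \<in> n \<and>
            (\<exists>l\<in>L. a \<in> l \<and> c \<in> l \<and> par m l) \<and>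
            (\<exists>l\<in>L. b \<in> l \<and> c \<in> l \<and> par n l) \<longrightarrow> m \<inter> n \<noteq> {})"

lemma affine_geometryI: "affine_space P L par \<Longrightarrow> affine_geometry P L par"
  unfolding affine_space_def affine_geometry_def by (elim conjE) (intro conjI; assumption)

context affine_geometry
begin

lemma line_subset: "l \<in> L \<Longrightarrow> l \<subseteq> P"
  using lines_ax by simp

lemma line_two_points: "l \<in> L \<Longrightarrow> \<exists>x y. x \<noteq> y \<and> x \<in> l \<and> y \<in> l"
  using lines_ax by simp

lemma line_through:
  assumes "x \<in> P" "y \<in> P" "x \<noteq> y" shows "\<exists>l\<in>L. x \<in> l \<and> y \<in> l"
  using ex1_implies_ex[OF joining_line_ax[rule_format, OF assms]] by blast

lemma line_unique:
  assumes "l \<in> L" "m \<in> L" "x \<noteq> y" "x \<in> l" "y \<in> l" "x \<in> m" "y \<in> m"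
  shows "l = m"
proof -
  have "x \<in> P" "y \<in> P" using assms line_subset by auto
  then have "\<exists>!l. l \<in> L \<and> x \<in> l \<and> y \<in> l" using joining_line_ax assms(3) by blast
  then show ?thesis using assms by (elim ex1E) blast
qed

lemma par_lines: "par a b \<Longrightarrow> a \<in> L \<and> b \<in> L"
  using par_lines_ax by blast

lemma par_refl: "a \<in> L \<Longrightarrow> par a a"
  using par_refl_ax by blast

lemma par_sym: "par a b \<Longrightarrow> par b a"
  using par_sym_ax by blast

lemma par_trans: "par a b \<Longrightarrow> par b c \<Longrightarrow> par a c"
  using par_trans_ax by blast

lemma parallel_through:
  assumes "x \<in> P" "l \<in> L" shows "\<exists>m\<in>L. x \<in> m \<and> par m l"
  using ex1_implies_ex[OF parallel_ax[rule_format, OF assms]] by blast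

lemma parallel_unique:
  assumes "m \<in> L" "m' \<in> L" "x \<in> m" "x \<in> m'" "par m l" "par m' l"
  shows "m = m'"
proof -
  have "x \<in> P" "l \<in> L" using assms line_subset par_lines by auto
  then have "\<exists>!m. m \<in> L \<and> x \<in> m \<and> par m l" using parallel_ax by blast
  then show ?thesis using assms by (elim ex1E) blast
qed

lemma triangle_axiom:
  assumes abc: "\<not> collinear L a b c" "c \<in> P"
    and g: "g \<in> L" "a \<in> g" "b \<in> g" and g': "g' \<in> L" "a' \<in> g'" "b' \<in> g'" "a' \<noteq> b'" "par g g'"
    and m: "m \<in> L" "a' \<in> m" "k \<in> L" "a \<in> k" "c \<in> k" "par m k"
    and n: "n \<in> L" "b' \<in> n" "h \<in> L" "b \<in> h" "c \<in> h" "par n h"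
  shows "m \<inter> n \<noteq> {}"
proof -
  have "a \<noteq> b"
  proof
    assume "a = b"
    have "a \<in> P" using g line_subset by auto
    then have "\<exists>l\<in>L. a \<in> l \<and> c \<in> l" using line_through[of a c] abc(2) g by (cases "a = c") auto
    then show False using abc(1) \<open>a = b\<close> unfolding collinear_def by blast
  qed
  have all_par: "\<forall>l\<in>L. \<forall>l'\<in>L. a \<in> l \<and> b \<in> l \<and> a' \<in> l' \<and> b' \<in> l' \<longrightarrow> par l l'"
  proof (intro ballI impI)
    fix l l' assume "l \<in> L" "l' \<in> L" "a \<in> l \<and> b \<in> l \<and> a' \<in> l' \<and> b' \<in> l'"
    then have "l = g" "l' = g'"
      using line_unique[of l g a b] line_unique[of l' g' a' b'] g g' \<open>a \<noteq> b\<close> by auto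
    then show "par l l'" using g' by simp
  qed
  have "a \<in> P" "b \<in> P" "a' \<in> P" "b' \<in> P" using g g' line_subset by auto
  then show ?thesis
    using triangle_ax[rule_format, of a b c a' b' m n] abc g' all_par m n by blast
qed

lemma par_meet_eq: "par m n \<Longrightarrow> x \<in> m \<Longrightarrow> x \<in> n \<Longrightarrow> m = n"
  using parallel_unique[of m n x n] par_lines par_refl by blast

lemma off_line_not_collinear:
  assumes "l \<in> L" "x \<in> l" "y \<in> l" "x \<noteq> y" "z \<notin> l"
  shows "\<not> collinear L x y z \<and> \<not> collinear L x z y \<and> \<not> collinear L z x y \<and>
         \<not> collinear L y x z \<and> \<not> collinear L y z x \<and> \<not> collinear L z y x"
proof -
  have "\<not> collinear L x y z"
  proof
    assume "collinear L x y z"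
    then obtain m where "m \<in> L" "x \<in> m" "y \<in> m" "z \<in> m" unfolding collinear_def by blast
    then show False using line_unique[of m l x y] assms by blast
  qed
  then show ?thesis unfolding collinear_def by blast
qed

lemma parallel_transversal_meets:
  assumes gh: "par g h" "g \<noteq> h"
    and l: "l \<in> L" "u \<in> g" "u \<in> l" "v \<in> h" "v \<in> l"
    and l': "l' \<in> L" "u' \<in> g" "u' \<in> l'" "par l' l"
  shows "l' \<inter> h \<noteq> {}"
proof (cases "u' = u")
  case True
  then have "l' = l" using parallel_unique[of l' l u l] l l' par_refl by blast
  then show ?thesis using l by blast
next
  case False
  have gL: "g \<in> L" "h \<in> L" using gh par_lines by auto
  have v_off_g: "v \<notin> g" using par_meet_eq[of g h v] gh l by blast
  have pts: "u \<in> P" "v \<in> P" "u' \<in> P" using l l' gL line_subset by auto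
  then obtain k where k: "k \<in> L" "v \<in> k" "u' \<in> k" using line_through[of v u'] v_off_g l' by blast
  have "\<not> collinear L v u' u" using off_line_not_collinear[of g u' u v] gL l l' False v_off_g by blast
  then show ?thesis
    by (rule triangle_axiom[of v u' u k k u' v l' l h g])
       (use pts k l l' gL par_refl par_sym gh v_off_g in auto)
qed

lemma strip_transversals_meet:
  assumes strip: "par g h" "g \<noteq> h" and lk: "l \<in> L" "k \<in> L" "\<not> par l k"
    and l: "y1 \<in> g" "y1 \<in> l" "y2 \<in> h" "y2 \<in> l"
    and k: "s1 \<in> g" "s1 \<in> k" "s2 \<in> h" "s2 \<in> k"
  shows "l \<inter> k \<noteq> {}"
proof (cases "y1 = s1")
  case True
  then show ?thesis using l k by blast
next
  case False
  have gL: "g \<in> L" "h \<in> L" using strip par_lines by auto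
  have pts: "y1 \<in> P" "s1 \<in> P" "s2 \<in> P" using l k gL line_subset by auto
  obtain l0 where l0: "l0 \<in> L" "s1 \<in> l0" "par l0 l" using parallel_through[of s1 l] pts lk by blast
  obtain v where v: "v \<in> l0" "v \<in> h"
    using parallel_transversal_meets[of g h l y1 y2 l0 s1] strip lk l k l0 by blast
  have s1_off_h: "s1 \<notin> h" using par_meet_eq[of g h s1] strip k by blast
  have "v \<noteq> s2"
  proof
    assume "v = s2"
    then have "l0 = k" using line_unique[of l0 k s1 s2] l0 v lk k s1_off_h by blast
    then show False using l0 lk par_sym by blast
  qed
  then have "\<not> collinear L v s2 s1"
    using off_line_not_collinear[of h v s2 s1] gL v k s1_off_h by blast
  moreover have "v \<in> P" using v gL line_subset by auto
  moreover have "par h g" "par l l0" "par k k" using strip l0 lk par_sym par_refl by auto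
  ultimately show ?thesis
    by (intro triangle_axiom[of v s2 s1 h g y1 s1 l l0 k k]) (use False pts gL l k lk l0 v in auto)
qed

lemma subspace_points: "affine_subspace P L par S \<Longrightarrow> S \<subseteq> P"
  unfolding affine_subspace_def by (elim conjE) assumption

lemma subspace_join:
  assumes "affine_subspace P L par S" "l \<in> L" "x \<in> S" "y \<in> S" "x \<noteq> y" "x \<in> l" "y \<in> l"
  shows "l \<subseteq> S"
proof -
  have "\<forall>l\<in>L. \<forall>x\<in>S. \<forall>y\<in>S. x \<noteq> y \<and> x \<in> l \<and> y \<in> l \<longrightarrow> l \<subseteq> S"
    using assms(1) unfolding affine_subspace_def by (elim conjE) assumption
  from this[rule_format, OF assms(2,3,4)] show ?thesis using assms(5,6,7) by simp
qed

lemma subspace_parallel: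
  assumes "affine_subspace P L par S" "l \<in> L" "m \<in> L" "x \<in> S" "l \<subseteq> S" "x \<in> m" "par m l"
  shows "m \<subseteq> S"
proof -
  have "\<forall>l\<in>L. \<forall>m\<in>L. \<forall>x\<in>S. l \<subseteq> S \<and> x \<in> m \<and> par m l \<longrightarrow> m \<subseteq> S"
    using assms(1) unfolding affine_subspace_def by (elim conjE) assumption
  from this[rule_format, OF assms(2,3,4)] show ?thesis using assms(5,6,7) by simp
qed

lemma dim3_witness:
  assumes "dim_ge P L par 3"
  obtains S l g x where "affine_subspace P L par S" "l \<in> L" "g \<in> L" "l \<noteq> g" "l \<subseteq> S" "g \<subseteq> S"
    "l \<inter> g \<noteq> {}" "x \<in> P" "x \<notin> S"
proof -
  obtain S where S: "\<forall>i\<le>3. affine_subspace P L par (S i)" "S 0 \<noteq> {}"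
      "\<forall>i<3. S i \<subset> S (Suc i)" using assms unfolding dim_ge_def by blast
  have sub: "affine_subspace P L par (S 1)" "affine_subspace P L par (S 2)"
     "affine_subspace P L par (S 3)" using S(1) by auto
  have chain: "S 0 \<subset> S 1" "S 1 \<subset> S 2" "S 2 \<subset> S 3"
    using S(3) by (auto simp: numeral_2_eq_2 numeral_3_eq_3)
  obtain x0 where x0: "x0 \<in> S 0" using S(2) by blast
  obtain x1 where x1: "x1 \<in> S 1" "x1 \<notin> S 0" using chain by blast
  obtain x2 where x2: "x2 \<in> S 2" "x2 \<notin> S 1" using chain by blast
  obtain x3 where x3: "x3 \<in> S 3" "x3 \<notin> S 2" using chain by blast
  have in_S1: "x0 \<in> S 1" and in_S2: "x0 \<in> S 2" "x1 \<in> S 2" using x0 x1 chain by auto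
  have pts: "x0 \<in> P" "x1 \<in> P" "x2 \<in> P" "x3 \<in> P"
    using in_S2 x2 x3 sub subspace_points by blast+
  have "x0 \<noteq> x1" "x0 \<noteq> x2" using x0 x1 x2 in_S1 by auto
  then obtain l g where l: "l \<in> L" "x0 \<in> l" "x1 \<in> l" and g: "g \<in> L" "x0 \<in> g" "x2 \<in> g"
    using line_through pts by metis
  have "l \<subseteq> S 1" using subspace_join[OF sub(1) l(1) in_S1 x1(1) \<open>x0 \<noteq> x1\<close> l(2,3)] .
  moreover have "g \<subseteq> S 2" using subspace_join[OF sub(2) g(1) in_S2(1) x2(1) \<open>x0 \<noteq> x2\<close> g(2,3)] .
  ultimately show ?thesis
    using that[of "S 2" l g x3] sub(2) l g x2 x3 pts chain by blast
qed

end

text \<open>Two distinct lines a, b through a point p span a plane: the points whose parallel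
  to a meets b.\<close>

locale intersecting_lines = affine_geometry +
  fixes a b :: "'p set" and p :: 'p
  assumes a_line: "a \<in> L" and b_line: "b \<in> L" and a_ne_b: "a \<noteq> b"
    and p_on_a: "p \<in> a" and p_on_b: "p \<in> b"
begin

definition plane :: "'p set" where
  "plane = {y \<in> P. \<exists>m\<in>L. y \<in> m \<and> par m a \<and> m \<inter> b \<noteq> {}}"

lemma plane_subset: "plane \<subseteq> P"
  unfolding plane_def by blast

lemma plane_point_parallel:
  "y \<in> plane \<Longrightarrow> \<exists>m s. m \<in> L \<and> y \<in> m \<and> par m a \<and> s \<in> m \<and> s \<in> b"
  unfolding plane_def by blast

lemma plane_parallel_meets:
  assumes "y \<in> plane" "m \<in> L" "y \<in> m" "par m a"
  shows "m \<inter> b \<noteq> {}"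
  using plane_point_parallel[OF assms(1)] parallel_unique[of m _ y a] assms by blast

lemma plane_parallel_line:
  assumes "y \<in> plane" "m \<in> L" "y \<in> m" "par m a"
  shows "m \<subseteq> plane"
  using plane_parallel_meets[OF assms] assms(2,4) line_subset[OF assms(2)]
  unfolding plane_def by blast

lemma a_in_plane: "a \<subseteq> plane"
  unfolding plane_def using a_line par_refl p_on_a p_on_b line_subset by blast

lemma b_in_plane: "b \<subseteq> plane"
proof
  fix y assume y: "y \<in> b"
  then have "y \<in> P" using b_line line_subset by auto
  then obtain m where "m \<in> L" "y \<in> m" "par m a" using parallel_through a_line by blast
  then show "y \<in> plane" unfolding plane_def using y \<open>y \<in> P\<close> by blast
qed

text \<open>A line through two distinct points of the plane that is parallel to neither
  a nor b meets b (both points lie on parallels to a reaching b).\<close>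

lemma plane_line_meets_b:
  assumes y: "y1 \<in> plane" "y2 \<in> plane" "y1 \<noteq> y2" "l \<in> L" "y1 \<in> l" "y2 \<in> l"
    and not_par: "\<not> par l a" "\<not> par l b"
  shows "l \<inter> b \<noteq> {}"
proof -
  obtain m1 s1 where m1: "m1 \<in> L" "y1 \<in> m1" "par m1 a" "s1 \<in> m1" "s1 \<in> b"
    using plane_point_parallel y by blast
  obtain m2 s2 where m2: "m2 \<in> L" "y2 \<in> m2" "par m2 a" "s2 \<in> m2" "s2 \<in> b"
    using plane_point_parallel y by blast
  have "m1 \<noteq> m2"
  proof
    assume "m1 = m2"
    then have "l = m1" using line_unique[of l m1 y1 y2] y m1 m2 by blast
    then show False using not_par m1 by simp
  qed
  moreover have "par m1 m2" using m1 m2 par_sym par_trans by blast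
  ultimately show ?thesis
    using strip_transversals_meet[of m1 m2 l b y1 y2 s1 s2] m1 m2 y b_line not_par by blast
qed

lemma plane_line_parallel_b:
  assumes y: "y \<in> plane" and l: "l \<in> L" "y \<in> l" "par l b"
  shows "l \<subseteq> plane"
proof (cases "y \<in> b")
  case True
  then have "l = b" using parallel_unique[of l b y b] l b_line par_refl by blast
  then show ?thesis using b_in_plane by simp
next
  case False
  obtain m s where m: "m \<in> L" "y \<in> m" "par m a" "s \<in> m" "s \<in> b"
    using plane_point_parallel y by blast
  have strip: "par l b" "l \<noteq> b" using l False by auto
  show ?thesis
  proof
    fix z assume z: "z \<in> l"
    then have "z \<in> P" using l line_subset by auto
    then obtain mz where mz: "mz \<in> L" "z \<in> mz" "par mz a" using parallel_through a_line by blast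
    then have "par mz m" using m par_sym par_trans by blast
    then have "mz \<inter> b \<noteq> {}"
      using parallel_transversal_meets[of l b m y s mz z] strip m l z mz by blast
    then show "z \<in> plane" unfolding plane_def using \<open>z \<in> P\<close> mz by blast
  qed
qed

lemma plane_line_through_b:
  assumes l: "l \<in> L" "\<not> par l a" "\<not> par l b" and t: "t \<in> l" "t \<in> b"
    and y: "y \<in> plane" "y \<in> l" "y \<noteq> t"
  shows "l \<subseteq> plane"
proof
  have y_off_b: "y \<notin> b"
  proof
    assume "y \<in> b"
    then have "l = b" using line_unique[of l b y t] l y t b_line by blast
    then show False using l b_line par_refl by blast
  qed
  obtain my s where my: "my \<in> L" "y \<in> my" "par my a" "s \<in> my" "s \<in> b"
    using plane_point_parallel y by blast
  have "s \<noteq> t"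
  proof
    assume "s = t"
    then have "my = l" using line_unique[of my l y t] my l y t by blast
    then show False using l my by simp
  qed
  then have noncol: "\<not> collinear L y t s"
    using off_line_not_collinear[of b t s y] b_line t my y_off_b by blast
  have pts: "y \<in> P" "s \<in> P" using y plane_subset my line_subset by auto
  fix z assume z: "z \<in> l"
  show "z \<in> plane"
  proof (cases "z = t")
    case True
    then show ?thesis using t b_in_plane by blast
  next
    case False
    have "z \<in> P" using l z line_subset by auto
    then obtain mz where mz: "mz \<in> L" "z \<in> mz" "par mz a" using parallel_through a_line by blast
    have "par mz my" "par l l" "par b b" using mz my l b_line par_sym par_trans par_refl by blast+
    then have "mz \<inter> b \<noteq> {}"
      by (intro triangle_axiom[of y t s l l z t mz my b b]) (use noncol pts False l z t y mz my b_line in auto)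
    then show ?thesis unfolding plane_def using \<open>z \<in> P\<close> mz by blast
  qed
qed

lemma plane_join_closed:
  assumes y: "y1 \<in> plane" "y2 \<in> plane" "y1 \<noteq> y2" and l: "l \<in> L" "y1 \<in> l" "y2 \<in> l"
  shows "l \<subseteq> plane"
proof (cases "par l a")
  case True
  then show ?thesis using plane_parallel_line y l by blast
next
  case not_a: False
  show ?thesis
  proof (cases "par l b")
    case True
    then show ?thesis using plane_line_parallel_b y l by blast
  next
    case not_b: False
    obtain t where t: "t \<in> l" "t \<in> b" using plane_line_meets_b[OF y l not_a not_b] by blast
    obtain y where "y \<in> plane" "y \<in> l" "y \<noteq> t" using y l by blast
    then show ?thesis using plane_line_through_b[OF l(1) not_a not_b t] by blast
  qed
qed

context
  assumes whole: "P \<subseteq> plane"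
begin

lemma parallel_a_meets_parallel_b:
  assumes l: "l \<in> L" "par l b" and m: "m \<in> L" "y \<in> m" "par m a"
  shows "m \<inter> l \<noteq> {}"
proof -
  have "y \<in> plane" using m line_subset whole by blast
  then obtain s where s: "s \<in> m" "s \<in> b" using plane_parallel_meets m by blast
  show ?thesis
  proof (cases "l = b")
    case True
    then show ?thesis using s by blast
  next
    case False
    obtain u where u: "u \<in> l" using line_two_points l by blast
    then have "u \<in> plane" using l line_subset whole by blast
    then obtain mu su where mu: "mu \<in> L" "u \<in> mu" "par mu a" "su \<in> mu" "su \<in> b"
      using plane_point_parallel by blast
    have "par b l" "par m mu" using l m mu par_sym par_trans by blast+
    then show ?thesis
      using parallel_transversal_meets[of b l mu su u m s] False mu u s m by blast
  qed
qed

lemma parallel_a_meets: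
  assumes l: "l \<in> L" "\<not> par l a" and m: "m \<in> L" "y \<in> m" "par m a"
  shows "m \<inter> l \<noteq> {}"
proof (cases "par l b")
  case True
  then show ?thesis using parallel_a_meets_parallel_b l m by blast
next
  case not_b: False
  obtain u1 u2 where u12: "u1 \<noteq> u2" "u1 \<in> l" "u2 \<in> l" using line_two_points l by blast
  then have "u1 \<in> plane" "u2 \<in> plane" using l line_subset whole by blast+
  then obtain t where t: "t \<in> l" "t \<in> b" using plane_line_meets_b u12 l not_b by blast
  have "y \<in> plane" using m line_subset whole by blast
  then obtain s where s: "s \<in> m" "s \<in> b" using plane_parallel_meets m by blast
  show ?thesis
  proof (cases "s = t")
    case True
    then show ?thesis using s t by blast
  next
    case s_ne_t: False
    obtain y1 where y1: "y1 \<in> l" "y1 \<noteq> t" using line_two_points[OF l(1)] by metis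
    have pts: "t \<in> P" "y1 \<in> P" "s \<in> P" using t y1 s l b_line line_subset by auto
    have y1_off_b: "y1 \<notin> b"
    proof
      assume "y1 \<in> b"
      then have "l = b" using line_unique[of l b y1 t] l y1 t b_line by blast
      then show False using not_b b_line par_refl by blast
    qed
    obtain mt where mt: "mt \<in> L" "t \<in> mt" "par mt a" using parallel_through pts a_line by blast
    obtain b1 where b1: "b1 \<in> L" "y1 \<in> b1" "par b1 b" using parallel_through pts b_line by blast
    have "y1 \<in> plane" using pts whole by blast
    then obtain m1 s1 where m1: "m1 \<in> L" "y1 \<in> m1" "par m1 a" "s1 \<in> m1" "s1 \<in> b"
      using plane_point_parallel by blast
    have strip: "par b b1" "b \<noteq> b1" using b1 y1_off_b par_sym by auto
    have "par mt m1" using mt m1 par_sym par_trans by blast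
    then obtain B where B: "B \<in> mt" "B \<in> b1"
      using parallel_transversal_meets[of b b1 m1 s1 y1 mt t] strip m1 b1 t mt by blast
    have "B \<noteq> t" using B t par_meet_eq[of b b1 t] strip by blast
    moreover have y1_off_mt: "y1 \<notin> mt"
    proof
      assume "y1 \<in> mt"
      then have "mt = l" using line_unique[of mt l y1 t] mt l y1 t by blast
      then show False using mt l by simp
    qed
    ultimately have noncol: "\<not> collinear L y1 B t"
      using off_line_not_collinear[of mt B t y1] mt B by blast
    have "B \<in> P" "y1 \<noteq> B" using B mt line_subset y1_off_mt by auto
    moreover have "par l l" "par m mt" using l m mt par_refl par_sym par_trans by blast+
    ultimately have "l \<inter> m \<noteq> {}"
      by (intro triangle_axiom[of y1 B t b1 b t s l l m mt])
         (use noncol pts s_ne_t b1 B t s b_line y1 l m mt in auto)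
    then show ?thesis by blast
  qed
qed

lemma non_parallel_lines_meet:
  assumes gh: "g \<in> L" "h \<in> L" "\<not> par g h"
  shows "g \<inter> h \<noteq> {}"
proof (cases "par g a")
  case True
  then have "\<not> par h a" using par_trans par_sym gh by blast
  moreover obtain y where "y \<in> g" using line_two_points gh by blast
  ultimately show ?thesis using parallel_a_meets[of h g y] gh True by blast
next
  case g_not_a: False
  show ?thesis
  proof (cases "par h a")
    case True
    obtain y where "y \<in> h" using line_two_points gh by blast
    then show ?thesis using parallel_a_meets[of g h y] gh True g_not_a by blast
  next
    case h_not_a: False
    obtain y1 y2 where y: "y1 \<noteq> y2" "y1 \<in> g" "y2 \<in> g" using line_two_points gh by blast
    have pts: "y1 \<in> P" "y2 \<in> P" using y gh line_subset by auto
    obtain m1 where m1: "m1 \<in> L" "y1 \<in> m1" "par m1 a" using parallel_through pts a_line by blast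
    obtain m2 where m2: "m2 \<in> L" "y2 \<in> m2" "par m2 a" using parallel_through pts a_line by blast
    have "m1 \<noteq> m2"
    proof
      assume "m1 = m2"
      then have "g = m1" using line_unique[of g m1 y1 y2] gh m1 m2 y by blast
      then show False using g_not_a m1 by simp
    qed
    moreover have "par m1 m2" using m1 m2 par_sym par_trans by blast
    moreover obtain w1 where "w1 \<in> m1" "w1 \<in> h" using parallel_a_meets[of h m1 y1] gh h_not_a m1 by blast
    moreover obtain w2 where "w2 \<in> m2" "w2 \<in> h" using parallel_a_meets[of h m2 y2] gh h_not_a m2 by blast
    ultimately show ?thesis using strip_transversals_meet[of m1 m2 g h y1 y2 w1 w2] gh y m1 m2 by blast
  qed
qed

end

lemma plane_not_whole_space:
  assumes "dim_ge P L par 3"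
  shows "\<not> P \<subseteq> plane"
proof
  assume whole: "P \<subseteq> plane"
  obtain S l g x where S: "affine_subspace P L par S" and lg: "l \<in> L" "g \<in> L" "l \<noteq> g"
    "l \<subseteq> S" "g \<subseteq> S" "l \<inter> g \<noteq> {}" and x: "x \<in> P" "x \<notin> S"
    by (rule dim3_witness[OF assms])
  obtain n where n: "n \<in> L" "x \<in> n" "par n l" using parallel_through x lg by blast
  have "\<not> par n g"
  proof
    assume "par n g"
    then have "par l g" using n par_sym par_trans by blast
    then show False using par_meet_eq lg by blast
  qed
  then obtain w where w: "w \<in> n" "w \<in> g" using non_parallel_lines_meet[OF whole n(1) lg(2)] by blast
  then have "n \<subseteq> S" using subspace_parallel[OF S lg(1) n(1) _ lg(4) w(1) n(3)] lg(5) by blast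
  then show False using n x by blast
qed

lemma triangle_transversal_in_plane:
  assumes c: "c \<in> L" "p \<notin> c" "a \<inter> c \<noteq> {}" "b \<inter> c \<noteq> {}"
    and d: "d \<in> L" "d \<inter> a \<noteq> {}" "d \<inter> b \<noteq> {}" "d \<inter> c \<noteq> {}"
  shows "d \<subseteq> plane"
proof -
  have only_p: "x = p" if "x \<in> a" "x \<in> b" for x
    using line_unique[of a b x p] a_line b_line that p_on_a p_on_b a_ne_b by blast
  obtain q r where q: "q \<in> a" "q \<in> c" and r: "r \<in> b" "r \<in> c" using c by blast
  have "q \<noteq> r" using only_p q r c by blast
  then have c_plane: "c \<subseteq> plane" using plane_join_closed[of q r c] q r a_in_plane b_in_plane c by blast
  obtain qa qb qc where qs: "qa \<in> d" "qa \<in> a" "qb \<in> d" "qb \<in> b" "qc \<in> d" "qc \<in> c"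
    using d by blast
  show ?thesis
  proof (cases "qa = qb")
    case False
    then show ?thesis using plane_join_closed[of qa qb d] qs a_in_plane b_in_plane d by blast
  next
    case True
    then have "qa = p" "qc \<noteq> p" using only_p qs c by blast+
    then show ?thesis using plane_join_closed[of qa qc d] qs a_in_plane c_plane d by blast
  qed
qed

end

context affine_geometry
begin

text \<open>In dimension at least 3, for a triangle a, b, c there is a line disjoint from every
  line meeting all three sides: a parallel to a through a point off the plane of a and b.\<close>

lemma line_avoiding_triangle_transversals:
  assumes dim: "dim_ge P L par 3"
    and ab: "a \<in> L" "b \<in> L" "a \<noteq> b" "p \<in> a" "p \<in> b"
    and c: "c \<in> L" "p \<notin> c" "a \<inter> c \<noteq> {}" "b \<inter> c \<noteq> {}"
  shows "\<exists>l\<in>L. \<forall>d\<in>L. d \<inter> a \<noteq> {} \<and> d \<inter> b \<noteq> {} \<and> d \<inter> c \<noteq> {} \<longrightarrow> l \<inter> d = {}"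
proof -
  interpret intersecting_lines P L par a b p
    by (rule intersecting_lines.intro[OF affine_geometry_axioms], unfold_locales) (use ab in auto)
  obtain z where z: "z \<in> P" "z \<notin> plane" using plane_not_whole_space[OF dim] by blast
  obtain l where l: "l \<in> L" "z \<in> l" "par l a" using parallel_through z ab by blast
  have "l \<inter> d = {}" if d: "d \<in> L" "d \<inter> a \<noteq> {}" "d \<inter> b \<noteq> {}" "d \<inter> c \<noteq> {}" for d
  proof (rule ccontr)
    assume "l \<inter> d \<noteq> {}"
    then obtain w where w: "w \<in> l" "w \<in> d" by blast
    have "d \<subseteq> plane" using triangle_transversal_in_plane c d by blast
    then have "l \<subseteq> plane" using plane_parallel_line[of w l] w l by blast
    then show False using z l by blast
  qed
  then show ?thesis using l by blast
qed

end

definition max_clique :: "'p set set \<Rightarrow> 'p set set \<Rightarrow> bool" where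
  "max_clique L K \<longleftrightarrow> K \<subseteq> L \<and> (\<forall>a\<in>K. \<forall>b\<in>K. related a b) \<and>
     (\<forall>m\<in>L. (\<forall>a\<in>K. related m a) \<longrightarrow> m \<in> K)"

definition dominating :: "'p set set \<Rightarrow> 'p set set \<Rightarrow> bool" where
  "dominating L K \<longleftrightarrow> (\<forall>m\<in>L. \<exists>a\<in>K. related m a)"

definition pencil :: "'p set set \<Rightarrow> 'p \<Rightarrow> 'p set set" where
  "pencil L x = {l \<in> L. x \<in> l}"

text \<open>Both notions are defined by the relation alone, so an isomorphism of Pluecker
  spaces preserves them.\<close>

lemma iso_image_dominating_max_clique:
  assumes bij: "bij_betw \<phi> L L'" and iso: "\<forall>a\<in>L. \<forall>b\<in>L. related a b \<longleftrightarrow> related (\<phi> a) (\<phi> b)"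
    and K: "max_clique L K" "dominating L K"
  shows "max_clique L' (\<phi> ` K) \<and> dominating L' (\<phi> ` K)"
proof -
  have KL: "K \<subseteq> L" using K unfolding max_clique_def by blast
  have L': "L' = \<phi> ` L" using bij by (simp add: bij_betw_def)
  have rel: "related (\<phi> m) (\<phi> a) \<longleftrightarrow> related m a" if "m \<in> L" "a \<in> K" for m a
    using iso that KL by blast
  show ?thesis
    using K KL unfolding max_clique_def dominating_def L' by (auto simp: rel)
qed

context affine_geometry
begin

lemma pencil_dominating_max_clique:
  assumes x: "x \<in> P"
  shows "max_clique L (pencil L x) \<and> dominating L (pencil L x)"
proof -
  have maximal: "m \<in> pencil L x" if m: "m \<in> L" "\<forall>a\<in>pencil L x. related m a" for m
  proof -
    obtain m0 where m0: "m0 \<in> L" "x \<in> m0" "par m0 m" using parallel_through x m by blast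
    then have "related m m0" using m unfolding pencil_def by blast
    then have "m0 = m" using par_meet_eq[OF m0(3)] unfolding related_def by blast
    then show ?thesis using m0 unfolding pencil_def by blast
  qed
  have dom: "\<exists>a\<in>pencil L x. related l a" if l: "l \<in> L" for l
  proof -
    obtain u where u: "u \<in> l" using line_two_points l by blast
    then have "u \<in> P" using l line_subset by auto
    then obtain k where "k \<in> L" "x \<in> k" "u \<in> k"
      using line_through[OF x] l u by (cases "u = x") auto
    then show ?thesis using u unfolding pencil_def related_def by blast
  qed
  show ?thesis
    using maximal dom unfolding max_clique_def dominating_def pencil_def related_def by blast
qed

lemma point_off_line:
  assumes dim: "dim_ge P L par 3" and l: "l \<in> L"
  shows "\<exists>z\<in>P. z \<notin> l"
proof (rule ccontr)
  assume "\<not> (\<exists>z\<in>P. z \<notin> l)"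
  then have P_l: "P \<subseteq> l" by blast
  obtain S l1 l2 x where l12: "l1 \<in> L" "l2 \<in> L" "l1 \<noteq> l2"
    by (rule dim3_witness[OF dim])
  have "k = l" if k: "k \<in> L" for k
  proof -
    obtain u v where uv: "u \<noteq> v" "u \<in> k" "v \<in> k" using line_two_points k by blast
    then have "u \<in> l" "v \<in> l" using k P_l line_subset by auto
    then show ?thesis using line_unique[of k l u v] k l uv by blast
  qed
  then show False using l12 by blast
qed

lemma two_lines_through:
  assumes dim: "dim_ge P L par 3" and x: "x \<in> P"
  shows "\<exists>l1 l2. l1 \<in> L \<and> l2 \<in> L \<and> l1 \<noteq> l2 \<and> x \<in> l1 \<and> x \<in> l2"
proof -
  obtain l1 where l1: "l1 \<in> L" "x \<in> l1"
  proof -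
    obtain S l g z where "l \<in> L" by (rule dim3_witness[OF dim])
    then obtain u v where "u \<noteq> v" "u \<in> P" "v \<in> P" using line_two_points line_subset by (meson subsetD)
    then obtain y where "y \<in> P" "y \<noteq> x" by metis
    then show thesis using line_through[OF x] that by blast
  qed
  obtain z where z: "z \<in> P" "z \<notin> l1" using point_off_line[OF dim l1(1)] by blast
  then obtain l2 where "l2 \<in> L" "x \<in> l2" "z \<in> l2" using line_through[OF x] l1 by blast
  then show ?thesis using l1 z by blast
qed

lemma max_clique_concurrent_pencil:
  assumes K: "max_clique L K" and q: "\<forall>c\<in>K. q \<in> c"
  shows "K = pencil L q"
proof
  show "K \<subseteq> pencil L q" using K q unfolding max_clique_def pencil_def by blast
  show "pencil L q \<subseteq> K"
  proof
    fix m assume "m \<in> pencil L q"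
    then have "m \<in> L" "\<forall>c\<in>K. related m c" using q unfolding pencil_def related_def by blast+
    then show "m \<in> K" using K unfolding max_clique_def by blast
  qed
qed

lemma max_clique_second_line:
  assumes dim: "dim_ge P L par 3" and K: "max_clique L K" and a: "a \<in> K"
  shows "\<exists>b\<in>K. b \<noteq> a"
proof (rule ccontr)
  assume "\<not> (\<exists>b\<in>K. b \<noteq> a)"
  then have K_a: "\<forall>c\<in>K. c = a" by blast
  have "a \<in> L" using K a unfolding max_clique_def by blast
  then obtain p where p: "p \<in> a" "p \<in> P" using line_two_points line_subset by (meson subsetD)
  then obtain a2 where a2: "a2 \<in> L" "a2 \<noteq> a" "p \<in> a2" using two_lines_through[OF dim] by metis
  then have "\<forall>c\<in>K. related a2 c" using K_a p unfolding related_def by blast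
  then have "a2 \<in> K" using K a2 unfolding max_clique_def by blast
  then show False using K_a a2 by blast
qed

text \<open>\<dots> and if it is dominating, all its lines pass through the meeting point of two of
  them: a line c of K missing that point would form a triangle with them, and the line
  avoiding all transversals of the triangle would be related to no member of K.\<close>

lemma dominating_max_clique_concurrent:
  assumes dim: "dim_ge P L par 3" and K: "max_clique L K" "dominating L K"
    and ab: "a \<in> K" "b \<in> K" "a \<noteq> b" "q \<in> a" "q \<in> b"
  shows "\<forall>c\<in>K. q \<in> c"
proof (rule ccontr)
  assume "\<not> (\<forall>c\<in>K. q \<in> c)"
  then obtain c where c: "c \<in> K" "q \<notin> c" by blast
  have KL: "K \<subseteq> L" and clique: "\<forall>a\<in>K. \<forall>b\<in>K. a \<inter> b \<noteq> {}"
    using K unfolding max_clique_def related_def by blast+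
  have lines: "a \<in> L" "b \<in> L" "c \<in> L" using KL ab c by auto
  have "a \<inter> c \<noteq> {}" "b \<inter> c \<noteq> {}" using clique ab c by auto
  then obtain l where l: "l \<in> L" "\<forall>d\<in>L. d \<inter> a \<noteq> {} \<and> d \<inter> b \<noteq> {} \<and> d \<inter> c \<noteq> {} \<longrightarrow> l \<inter> d = {}"
    using line_avoiding_triangle_transversals[OF dim lines(1,2) ab(3-5) lines(3) c(2)] by blast
  obtain d where d: "d \<in> K" "l \<inter> d \<noteq> {}"
    using K(2) l(1) unfolding dominating_def related_def by blast
  have "d \<in> L" "d \<inter> a \<noteq> {}" "d \<inter> b \<noteq> {}" "d \<inter> c \<noteq> {}" using d KL clique ab c by auto
  then show False using l d by blast
qed

lemma dominating_max_clique_is_pencil: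
  assumes dim: "dim_ge P L par 3" and K: "max_clique L K" "dominating L K"
  shows "\<exists>x\<in>P. K = pencil L x"
proof -
  have KL: "K \<subseteq> L" and clique: "\<forall>a\<in>K. \<forall>b\<in>K. a \<inter> b \<noteq> {}"
    using K(1) unfolding max_clique_def related_def by blast+
  obtain S l g z where "l \<in> L" by (rule dim3_witness[OF dim])
  then obtain a where a: "a \<in> K" using K(2) unfolding dominating_def by blast
  then obtain b where b: "b \<in> K" "b \<noteq> a" using max_clique_second_line[OF dim K(1)] by blast
  then obtain q where q: "q \<in> a" "q \<in> b" using clique a by blast
  have "q \<in> P" using q(1) a KL line_subset by blast
  moreover have "K = pencil L q"
    using max_clique_concurrent_pencil[OF K(1)] dominating_max_clique_concurrent[OF dim K a b(1)] b q
    by metis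
  ultimately show ?thesis by blast
qed

end

locale plucker_isomorphism =
  A: affine_geometry P L par + A': affine_geometry P' L' par'
  for P :: "'p set" and L :: "'p set set" and par :: "'p set \<Rightarrow> 'p set \<Rightarrow> bool"
    and P' :: "'q set" and L' :: "'q set set" and par' :: "'q set \<Rightarrow> 'q set \<Rightarrow> bool" +
  fixes \<phi> :: "'p set \<Rightarrow> 'q set"
  assumes dim: "dim_ge P' L' par' 3"
    and bij: "bij_betw \<phi> L L'"
    and iso: "\<forall>a\<in>L. \<forall>b\<in>L. related a b \<longleftrightarrow> related (\<phi> a) (\<phi> b)"
begin

definition \<kappa> :: "'p \<Rightarrow> 'q" where
  "\<kappa> x = (SOME x'. x' \<in> P' \<and> \<phi> ` pencil L x = pencil L' x')"

lemma image_pencil: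
  assumes x: "x \<in> P"
  shows "\<kappa> x \<in> P' \<and> \<phi> ` pencil L x = pencil L' (\<kappa> x)"
proof -
  have "max_clique L' (\<phi> ` pencil L x) \<and> dominating L' (\<phi> ` pencil L x)"
    using iso_image_dominating_max_clique[OF bij iso] A.pencil_dominating_max_clique[OF x] by blast
  then have "\<exists>x'. x' \<in> P' \<and> \<phi> ` pencil L x = pencil L' x'"
    using A'.dominating_max_clique_is_pencil[OF dim] by blast
  then show ?thesis unfolding \<kappa>_def by (rule someI_ex)
qed

lemma kappa_on_image_iff:
  assumes "x \<in> P" "l \<in> L"
  shows "\<kappa> x \<in> \<phi> l \<longleftrightarrow> x \<in> l"
proof -
  have "\<kappa> x \<in> \<phi> l \<longleftrightarrow> \<phi> l \<in> \<phi> ` pencil L x"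
    using image_pencil[OF assms(1)] bij assms(2) unfolding pencil_def bij_betw_def by auto
  also have "\<dots> \<longleftrightarrow> l \<in> pencil L x"
    using bij assms(2) unfolding pencil_def bij_betw_def inj_on_def by blast
  finally show ?thesis using assms(2) unfolding pencil_def by blast
qed

lemma image_lines_meet:
  assumes ab: "a \<in> L" "b \<in> L" "a \<noteq> b" "x \<in> a" "x \<in> b"
  shows "\<phi> a \<inter> \<phi> b = {\<kappa> x}"
proof -
  have x: "x \<in> P" using ab A.line_subset by auto
  have k: "\<kappa> x \<in> \<phi> a" "\<kappa> x \<in> \<phi> b" using kappa_on_image_iff[OF x] ab by auto
  have "\<phi> a \<noteq> \<phi> b" "\<phi> a \<in> L'" "\<phi> b \<in> L'"
    using bij ab unfolding bij_betw_def inj_on_def by auto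
  then have "y = \<kappa> x" if "y \<in> \<phi> a" "y \<in> \<phi> b" for y
    using A'.line_unique[of "\<phi> a" "\<phi> b" y "\<kappa> x"] that k by blast
  then show ?thesis using k by blast
qed

lemma kappa_inj: "inj_on \<kappa> P"
proof (rule inj_onI)
  fix x y assume xy: "x \<in> P" "y \<in> P" "\<kappa> x = \<kappa> y"
  show "x = y"
  proof (rule ccontr)
    assume "x \<noteq> y"
    have "\<kappa> x \<in> P'" using image_pencil[OF xy(1)] by blast
    then obtain l1' l2' where l': "l1' \<in> L'" "l2' \<in> L'" "l1' \<noteq> l2'" "\<kappa> x \<in> l1'" "\<kappa> x \<in> l2'"
      using A'.two_lines_through[OF dim] by blast
    then obtain l1 l2 where l: "l1 \<in> L" "l2 \<in> L" "l1' = \<phi> l1" "l2' = \<phi> l2"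
      using bij unfolding bij_betw_def by blast
    have "x \<in> l1" "x \<in> l2" using kappa_on_image_iff[OF xy(1)] l l' by simp_all
    moreover have "y \<in> l1" "y \<in> l2" using kappa_on_image_iff[OF xy(2)] xy(3) l l' by simp_all
    ultimately have "l1 = l2" using A.line_unique[OF l(1,2) \<open>x \<noteq> y\<close>] by blast
    then show False using l l' by blast
  qed
qed

lemma kappa_surj: "\<kappa> ` P = P'"
proof
  show "\<kappa> ` P \<subseteq> P'" using image_pencil by auto
  show "P' \<subseteq> \<kappa> ` P"
  proof
    fix x' assume "x' \<in> P'"
    then obtain a' b' where l': "a' \<in> L'" "b' \<in> L'" "a' \<noteq> b'" "x' \<in> a'" "x' \<in> b'"
      using A'.two_lines_through[OF dim] by blast
    have "L' = \<phi> ` L" using bij unfolding bij_betw_def by simp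
    then obtain a b where ab: "a \<in> L" "b \<in> L" "a' = \<phi> a" "b' = \<phi> b"
      using l'(1,2) by blast
    have "related (\<phi> a) (\<phi> b)" using l' ab unfolding related_def by blast
    then have "related a b" using iso ab(1,2) by blast
    then obtain x where x: "x \<in> a" "x \<in> b" unfolding related_def by blast
    have "\<phi> a \<inter> \<phi> b = {\<kappa> x}" using image_lines_meet[OF ab(1,2) _ x] ab l'(3) by blast
    then have "x' = \<kappa> x" using l' ab by blast
    moreover have "x \<in> P" using x ab A.line_subset by auto
    ultimately show "x' \<in> \<kappa> ` P" by blast
  qed
qed

lemma kappa_collinear_iff:
  assumes "x \<in> P" "y \<in> P" "z \<in> P"
  shows "collinear L' (\<kappa> x) (\<kappa> y) (\<kappa> z) \<longleftrightarrow> collinear L x y z"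
proof -
  have "L' = \<phi> ` L" using bij unfolding bij_betw_def by simp
  then have "collinear L' (\<kappa> x) (\<kappa> y) (\<kappa> z) \<longleftrightarrow>
      (\<exists>l\<in>L. \<kappa> x \<in> \<phi> l \<and> \<kappa> y \<in> \<phi> l \<and> \<kappa> z \<in> \<phi> l)"
    unfolding collinear_def by blast
  also have "\<dots> \<longleftrightarrow> collinear L x y z"
    unfolding collinear_def by (simp add: kappa_on_image_iff assms)
  finally show ?thesis .
qed

lemma kappa_collineation: "collineation P L P' L' \<kappa>"
  unfolding collineation_def bij_betw_def
  using kappa_inj kappa_surj kappa_collinear_iff by blast

end

theorem theorem1:
  fixes P :: "'p set" and L :: "'p set set" and par :: "'p set \<Rightarrow> 'p set \<Rightarrow> bool"
    and P' :: "'q set" and L' :: "'q set set" and par' :: "'q set \<Rightarrow> 'q set \<Rightarrow> bool"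
    and \<phi> :: "'p set \<Rightarrow> 'q set"
  assumes A: "affine_space P L par"
    and A': "affine_space P' L' par'"
    and dim: "dim_ge P' L' par' 3"
    and bij: "bij_betw \<phi> L L'"
    and iso: "\<forall>a\<in>L. \<forall>b\<in>L. related a b \<longleftrightarrow> related (\<phi> a) (\<phi> b)"
  shows "(\<forall>a\<in>L. \<forall>b\<in>L. adjacent a b \<longrightarrow> (\<exists>x. \<phi> a \<inter> \<phi> b = {x})) \<and>
         (\<forall>a\<in>L. \<forall>b\<in>L. \<forall>c\<in>L. \<forall>d\<in>L. adjacent a b \<longrightarrow> adjacent c d \<longrightarrow>
             a \<inter> b = c \<inter> d \<longrightarrow> \<phi> a \<inter> \<phi> b = \<phi> c \<inter> \<phi> d) \<and>
         (\<exists>\<kappa> :: 'p \<Rightarrow> 'q.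
             (\<forall>a\<in>L. \<forall>b\<in>L. \<forall>x. adjacent a b \<longrightarrow> a \<inter> b = {x} \<longrightarrow> \<phi> a \<inter> \<phi> b = {\<kappa> x}) \<and>
             collineation P L P' L' \<kappa>)"
proof -
  interpret plucker_isomorphism P L par P' L' par' \<phi>
    using affine_geometryI[OF A] affine_geometryI[OF A'] dim bij iso
    by (simp add: plucker_isomorphism_def plucker_isomorphism_axioms_def)
  have meet: "\<phi> a \<inter> \<phi> b = {\<kappa> x}" if "a \<in> L" "b \<in> L" "adjacent a b" "x \<in> a" "x \<in> b" for a b x
    using image_lines_meet that unfolding adjacent_def by blast
  have "\<forall>a\<in>L. \<forall>b\<in>L. adjacent a b \<longrightarrow> (\<exists>x. \<phi> a \<inter> \<phi> b = {x})"
    using meet unfolding adjacent_def related_def by blast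
  moreover have "\<forall>a\<in>L. \<forall>b\<in>L. \<forall>c\<in>L. \<forall>d\<in>L. adjacent a b \<longrightarrow> adjacent c d \<longrightarrow>
      a \<inter> b = c \<inter> d \<longrightarrow> \<phi> a \<inter> \<phi> b = \<phi> c \<inter> \<phi> d"
    using meet unfolding adjacent_def related_def by (metis Int_iff ex_in_conv)
  moreover have "\<forall>a\<in>L. \<forall>b\<in>L. \<forall>x. adjacent a b \<longrightarrow> a \<inter> b = {x} \<longrightarrow> \<phi> a \<inter> \<phi> b = {\<kappa> x}"
    using meet by blast
  ultimately show ?thesis using kappa_collineation by blast
qed

end
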